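(* Let $(M,J)$ be an almost complex manifold, $\nabla$ a connection on $M$ with torsion $T$, and $\widetilde\nabla=\nabla-\tfrac12T$. Then $J^{H,\nabla}=J^{G,\widetilde\nabla}$.
   Context: $J^{G,D}$ denotes the generalized horizontal lift associated with a connection $D$: $D$ induces a connection on $T^*M$ by $(D_Xs)(Y)=X(s(Y))-s(D_XY)$; for $\xi\in T^*_xM$, $H^D_\xi=\{d_xs(X): X\in T_xM,\ s(x)=\xi,\ D_Xs=0\}$, $T_\xi T^*M=H^D_\xi\oplus T^*_xM$, $v^D$ the projection onto $T^*_xM$ along $H^D_\xi$, and $J^{G,D}(X,v^D(Y))=(JX,{}^tJ(v^D(Y)))$ with $JX:=(d_\xi\pi|_{H^D_\xi})^{-1}(J(x)d_\xi\pi(X))$. The horizontal lift is $J^{H,\nabla}:=J^c+\gamma([\widetilde\nabla J])$, where $[\widetilde\nabla J](X,Y)=-(\widetilde\nabla J)(X,Y)+(\widetilde\nabla J)(Y,X)$, $(\widetilde\nabla J)(X,Y)=\widetilde\nabla_X(JY)-J\widetilde\nabla_XY$; $\gamma(R):=p_kR^k_{ij}dx^i\otimes\partial_{p_j}$ for $R=R^k_{ij}dx^i\otimes dx^j\otimes\partial_{x_k}$ (coordinates $(x,p)$ on $T^*M$); $J^c$ is defined by $d(p_kJ^k_ldx^l)=\omega_{st}(J^c\cdot,\cdot)$, $\omega_{st}=d(p_idx^i)$. *)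

theory Defs
  imports "HOL-Analysis.Analysis"
begin

text \<open>M is represented by an open set U of real^'n
(a coordinate chart), points of T*M by pairs (x,p) with p the covector
components p_k, and tangent vectors to T*M at (x,p) by pairs (X,P) meaning
X^i d/dx_i + P_j d/dp_j.  A connection is given by its Christoffel symbols
Gam x k i j = Gamma^k_ij, i.e. nabla_{d_i} d_j = Gamma^k_ij d_k.  An almost complex
structure J is a matrix field with J x $ k $ l = J^k_l.\<close>

fun Ck_on :: "nat \<Rightarrow> 'a::euclidean_space set \<Rightarrow> ('a \<Rightarrow> 'b::real_normed_vector) \<Rightarrow> bool" where
  "Ck_on 0 U f = continuous_on U f"
| "Ck_on (Suc k) U f =
     ((\<forall>x\<in>U. f differentiable (at x)) \<and>
      (\<forall>v. Ck_on k U (\<lambda>x. frechet_derivative f (at x) v)))"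

definition smooth_on :: "'a::euclidean_space set \<Rightarrow> ('a \<Rightarrow> 'b::real_normed_vector) \<Rightarrow> bool" where
  "smooth_on U f \<longleftrightarrow> (\<forall>k. Ck_on k U f)"

definition cov_vf :: "(real^'n \<Rightarrow> 'n \<Rightarrow> 'n \<Rightarrow> 'n \<Rightarrow> real) \<Rightarrow> real^'n \<Rightarrow> real^'n
     \<Rightarrow> (real^'n \<Rightarrow> real^'n) \<Rightarrow> real^'n" where
  "cov_vf Gam x X Y =
     (\<chi> k. frechet_derivative Y (at x) X $ k + (\<Sum>i\<in>UNIV. \<Sum>j\<in>UNIV. Gam x k i j * X $ i * Y x $ j))"

definition coordvf :: "'n::finite \<Rightarrow> real^'n \<Rightarrow> real^'n" where
  "coordvf i = (\<lambda>_. axis i 1)"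

text \<open>Torsion T(X,Y) = nabla_X Y - nabla_Y X - [X,Y], in components
T^k_ij = T(d_i,d_j)^k (coordinate fields commute, [d_i,d_j] = 0).\<close>
definition torsion :: "(real^'n \<Rightarrow> 'n \<Rightarrow> 'n \<Rightarrow> 'n \<Rightarrow> real) \<Rightarrow> real^'n \<Rightarrow> 'n \<Rightarrow> 'n \<Rightarrow> 'n::finite \<Rightarrow> real" where
  "torsion Gam x k i j =
     (cov_vf Gam x (axis i 1) (coordvf j) - cov_vf Gam x (axis j 1) (coordvf i)) $ k"

definition tilde_conn :: "(real^'n \<Rightarrow> 'n \<Rightarrow> 'n \<Rightarrow> 'n \<Rightarrow> real) \<Rightarrow> real^'n \<Rightarrow> 'n \<Rightarrow> 'n \<Rightarrow> 'n::finite \<Rightarrow> real" where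
  "tilde_conn Gam x k i j = Gam x k i j - (1/2) * torsion Gam x k i j"

text \<open>Induced connection on T*M: (D_X s)(Y) = X(s(Y)) - s(D_X Y), at the point x,
for a section s given by its covector field sg.\<close>
definition cov_form :: "(real^'n \<Rightarrow> 'n \<Rightarrow> 'n \<Rightarrow> 'n \<Rightarrow> real) \<Rightarrow> real^'n \<Rightarrow> real^'n
     \<Rightarrow> (real^'n \<Rightarrow> real^'n) \<Rightarrow> (real^'n \<Rightarrow> real^'n) \<Rightarrow> real" where
  "cov_form Gam x X sg Y =
     frechet_derivative (\<lambda>y. sg y \<bullet> Y y) (at x) X - sg x \<bullet> cov_vf Gam x X Y"

definition parallel_at :: "(real^'n \<Rightarrow> 'n \<Rightarrow> 'n \<Rightarrow> 'n \<Rightarrow> real) \<Rightarrow> (real^'n) set \<Rightarrow> real^'n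
     \<Rightarrow> real^'n \<Rightarrow> (real^'n \<Rightarrow> real^'n) \<Rightarrow> bool" where
  "parallel_at Gam U x X sg \<longleftrightarrow> (\<forall>Y. smooth_on U Y \<longrightarrow> cov_form Gam x X sg Y = 0)"

text \<open>H^D_xi = { d_x s(X) : s(x) = xi, D_X s = 0 }, xi = (x,p); s(y) = (y, sg y).\<close>
definition horiz :: "(real^'n \<Rightarrow> 'n \<Rightarrow> 'n \<Rightarrow> 'n \<Rightarrow> real) \<Rightarrow> (real^'n) set \<Rightarrow> real^'n \<Rightarrow> real^'n
     \<Rightarrow> ((real^'n) \<times> (real^'n)) set" where
  "horiz Gam U x p =
     {(X, frechet_derivative sg (at x) X) | X sg.
        smooth_on U sg \<and> sg x = p \<and> parallel_at Gam U x X sg}"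

text \<open>v^D: projection onto the vertical T*_xM = {(0,P)} along H^D (returns P).\<close>
definition vproj :: "(real^'n \<Rightarrow> 'n \<Rightarrow> 'n \<Rightarrow> 'n \<Rightarrow> real) \<Rightarrow> (real^'n) set \<Rightarrow> real^'n \<Rightarrow> real^'n
     \<Rightarrow> (real^'n) \<times> (real^'n) \<Rightarrow> real^'n" where
  "vproj Gam U x p V = (THE P. V - (0, P) \<in> horiz Gam U x p)"

text \<open>Inverse of d pi restricted to H^D_xi (d pi (X,P) = X).\<close>
definition hlift :: "(real^'n \<Rightarrow> 'n \<Rightarrow> 'n \<Rightarrow> 'n \<Rightarrow> real) \<Rightarrow> (real^'n) set \<Rightarrow> real^'n \<Rightarrow> real^'n
     \<Rightarrow> real^'n \<Rightarrow> (real^'n) \<times> (real^'n)" where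
  "hlift Gam U x p X = (THE h. h \<in> horiz Gam U x p \<and> fst h = X)"

definition JG :: "(real^'n \<Rightarrow> 'n \<Rightarrow> 'n \<Rightarrow> 'n \<Rightarrow> real) \<Rightarrow> (real^'n) set \<Rightarrow> (real^'n \<Rightarrow> real^'n^'n)
     \<Rightarrow> real^'n \<Rightarrow> real^'n \<Rightarrow> (real^'n) \<times> (real^'n) \<Rightarrow> (real^'n) \<times> (real^'n)" where
  "JG Gam U J x p V =
     (let v = vproj Gam U x p V; h = V - (0, v)
      in hlift Gam U x p (J x *v fst h) + (0, transpose (J x) *v v))"

definition nablaJ :: "(real^'n \<Rightarrow> 'n \<Rightarrow> 'n \<Rightarrow> 'n \<Rightarrow> real) \<Rightarrow> (real^'n \<Rightarrow> real^'n^'n)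
     \<Rightarrow> real^'n \<Rightarrow> 'n \<Rightarrow> 'n \<Rightarrow> 'n::finite \<Rightarrow> real" where
  "nablaJ Gam J x k i j =
     (cov_vf Gam x (axis i 1) (\<lambda>y. J y *v coordvf j y) - J x *v cov_vf Gam x (axis i 1) (coordvf j)) $ k"

definition bracketJ :: "(real^'n \<Rightarrow> 'n \<Rightarrow> 'n \<Rightarrow> 'n \<Rightarrow> real) \<Rightarrow> (real^'n \<Rightarrow> real^'n^'n)
     \<Rightarrow> real^'n \<Rightarrow> 'n \<Rightarrow> 'n \<Rightarrow> 'n::finite \<Rightarrow> real" where
  "bracketJ Gam J x k i j = - nablaJ Gam J x k i j + nablaJ Gam J x k j i"

text \<open>gamma(R) = p_k R^k_ij dx^i (x) d/dp_j, as an endomorphism of T_(x,p) T*M.\<close>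
definition gamma_op :: "('n \<Rightarrow> 'n \<Rightarrow> 'n::finite \<Rightarrow> real) \<Rightarrow> (real^'n) \<times> (real^'n)
     \<Rightarrow> (real^'n) \<times> (real^'n) \<Rightarrow> (real^'n) \<times> (real^'n)" where
  "gamma_op R z V = (0, \<chi> j. \<Sum>i\<in>UNIV. \<Sum>k\<in>UNIV. snd z $ k * R k i j * fst V $ i)"

text \<open>Exterior derivative of a 1-form alpha on T*M (coordinates z = (x,p)),
evaluated on constant-coefficient vectors V, W.\<close>
definition ext_d :: "((real^'n) \<times> (real^'n) \<Rightarrow> (real^'n) \<times> (real^'n) \<Rightarrow> real)
     \<Rightarrow> (real^'n) \<times> (real^'n) \<Rightarrow> (real^'n) \<times> (real^'n) \<Rightarrow> (real^'n) \<times> (real^'n) \<Rightarrow> real" where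
  "ext_d alpha z V W =
     frechet_derivative (\<lambda>z'. alpha z' W) (at z) V - frechet_derivative (\<lambda>z'. alpha z' V) (at z) W"

definition liouville :: "(real^'n) \<times> (real^'n) \<Rightarrow> (real^'n) \<times> (real^'n) \<Rightarrow> real" where
  "liouville z V = (\<Sum>i\<in>UNIV. snd z $ i * fst V $ i)"

definition liouvilleJ :: "(real^'n \<Rightarrow> real^'n^'n) \<Rightarrow> (real^'n) \<times> (real^'n) \<Rightarrow> (real^'n) \<times> (real^'n) \<Rightarrow> real" where
  "liouvilleJ J z V = (\<Sum>k\<in>UNIV. \<Sum>l\<in>UNIV. snd z $ k * J (fst z) $ k $ l * fst V $ l)"

definition omega_st :: "(real^'n) \<times> (real^'n) \<Rightarrow> (real^'n) \<times> (real^'n) \<Rightarrow> (real^'n) \<times> (real^'n) \<Rightarrow> real" where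
  "omega_st = ext_d liouville"

definition Jc :: "(real^'n \<Rightarrow> real^'n^'n) \<Rightarrow> (real^'n) \<times> (real^'n)
     \<Rightarrow> (real^'n) \<times> (real^'n) \<Rightarrow> (real^'n) \<times> (real^'n)" where
  "Jc J z = (THE A. \<forall>V W. ext_d (liouvilleJ J) z V W = omega_st z (A V) W)"

definition JH :: "(real^'n \<Rightarrow> 'n \<Rightarrow> 'n \<Rightarrow> 'n \<Rightarrow> real) \<Rightarrow> (real^'n \<Rightarrow> real^'n^'n)
     \<Rightarrow> (real^'n) \<times> (real^'n) \<Rightarrow> (real^'n) \<times> (real^'n) \<Rightarrow> (real^'n) \<times> (real^'n)" where
  "JH Gam J z V = Jc J z V + gamma_op (bracketJ (tilde_conn Gam) J (fst z)) z V"

end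

theory Submission
  imports Defs
begin

text \<open>Writing \<open>\<Gamma>(X)\<close> for the matrix \<open>\<Gamma>\<^sup>k\<^sub>i\<^sub>j X\<^sup>i\<close> of a connection, the horizontal
space of \<open>\<nabla>\<close> at \<open>(x, p)\<close> is the graph of \<open>X \<mapsto> p \<Gamma>(X)\<close>, since the affine section
\<open>y \<mapsto> p + p \<Gamma>(y - x)\<close> is parallel at \<open>x\<close>.  Hence
\<open>J\<^sup>G(X, P) = (J X, p \<Gamma>(J X) + (P - p \<Gamma>(X)) J)\<close> for \<open>\<Gamma>\<close> the symbols of
\<open>\<nabla>\<^sup>~ = \<nabla> - T/2\<close>, which are symmetric in the lower indices.  On the other side,
\<open>J\<^sup>c(X, P) = (J X, P J + \<iota>\<^sub>X(p dJ))\<close>, where \<open>\<iota>\<^sub>X(p N)\<close> is the covector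
\<open>W \<mapsto> p N(X) W - p N(W) X\<close>, and \<open>\<gamma>([\<nabla>\<^sup>~J])\<close> adds \<open>-\<iota>\<^sub>X(p \<nabla>\<^sup>~J)\<close> with
\<open>\<nabla>\<^sup>~J = dJ + [\<Gamma>, J]\<close>.  The \<open>dJ\<close> terms cancel, and by the symmetry \<open>\<Gamma>(X) W = \<Gamma>(W) X\<close>
the commutator term contributes exactly \<open>p \<Gamma>(J X) - p \<Gamma>(X) J\<close>.\<close>

lemma linear_axis_expansion:
  fixes f :: "real^'n \<Rightarrow> 'b::real_vector"
  assumes "linear f"
  shows "f X = (\<Sum>i\<in>UNIV. X $ i *\<^sub>R f (axis i 1))"
proof -
  have "f X = f (\<Sum>i\<in>UNIV. X $ i *\<^sub>R axis i 1)"
    using basis_expansion[of X] by (simp add: scalar_mult_eq_scaleR)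
  then show ?thesis by (simp add: linear_sum[OF assms] linear_scale[OF assms])
qed

lemma bounded_linear_matrix_vector_mult_left: "bounded_linear (\<lambda>A::real^'n^'m. A *v v)"
proof -
  have "linear (\<lambda>A::real^'n^'m. A *v v)"
    by (rule linearI) (simp_all add: matrix_vector_mult_add_rdistrib scaleR_matrix_vector_assoc)
  then show ?thesis by (simp add: linear_conv_bounded_linear)
qed

lemma matrix_vector_mult_axis: "(A *v axis j 1) $ k = A $ k $ j" for A :: "real^'n^'m"
  by (simp add: matrix_vector_mult_def axis_def if_distrib[of "\<lambda>t. _ * t"] sum.delta' cong: if_cong)

lemma Ck_on_const: "Ck_on k U (\<lambda>_. c)"
proof (induction k arbitrary: c)
  case 0
  then show ?case by simp
next
  case (Suc k)
  have "frechet_derivative (\<lambda>_. c) (at x) = (\<lambda>_. 0)" for x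
    by (metis frechet_derivative_at has_derivative_const)
  then show ?case using Suc by simp
qed

lemma smooth_on_const: "smooth_on U (\<lambda>_. c)"
  unfolding smooth_on_def by (simp add: Ck_on_const)

lemma smooth_on_affine:
  assumes "bounded_linear L"
  shows "smooth_on U (\<lambda>y. p + L (y - x))"
proof -
  have d: "((\<lambda>y. p + L (y - x)) has_derivative L) (at y)" for y
    by (auto intro!: derivative_eq_intros bounded_linear.has_derivative[OF assms])
  then have "frechet_derivative (\<lambda>y. p + L (y - x)) (at y) = L" for y
    by (metis frechet_derivative_at)
  moreover have "continuous_on U (\<lambda>y. p + L (y - x))"
    by (intro continuous_at_imp_continuous_on ballI has_derivative_continuous[OF d])
  ultimately have "Ck_on k U (\<lambda>y. p + L (y - x))" for k
    using d by (cases k) (auto simp: differentiable_def Ck_on_const)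
  then show ?thesis unfolding smooth_on_def by blast
qed

lemma smooth_on_has_derivative:
  assumes "smooth_on U f" "x \<in> U"
  shows "(f has_derivative frechet_derivative f (at x)) (at x)"
  using assms frechet_derivative_works unfolding smooth_on_def by (metis Ck_on.simps(2))

definition chr_matrix :: "(real^'n \<Rightarrow> 'n \<Rightarrow> 'n \<Rightarrow> 'n \<Rightarrow> real) \<Rightarrow> real^'n \<Rightarrow> real^'n
    \<Rightarrow> real^'n^'n::finite" where
  "chr_matrix Gam x X = (\<chi> k j. \<Sum>i\<in>UNIV. Gam x k i j * X $ i)"

lemma chr_matrix_0 [simp]: "chr_matrix Gam x 0 = 0"
  by (simp add: chr_matrix_def vec_eq_iff)

lemma linear_chr_matrix: "linear (chr_matrix Gam x)"
  by (rule linearI) (simp_all add: chr_matrix_def vec_eq_iff algebra_simps sum.distrib sum_distrib_left)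

lemma bounded_linear_covector_chr_matrix: "bounded_linear (\<lambda>X. p v* chr_matrix Gam x X)"
proof -
  have "linear (\<lambda>X. p v* chr_matrix Gam x X)"
    using linear_chr_matrix[of Gam x]
    by (simp add: linear_iff vector_matrix_mult_add_rdistrib vector_scaleR_matrix_ac)
  then show ?thesis by (simp add: linear_conv_bounded_linear)
qed

lemma cov_vf_eq:
  assumes "(Y has_derivative DY) (at x)"
  shows "cov_vf Gam x X Y = DY X + chr_matrix Gam x X *v Y x"
proof -
  have "(\<Sum>i\<in>UNIV. \<Sum>j\<in>UNIV. Gam x k i j * X $ i * Y x $ j) = (chr_matrix Gam x X *v Y x) $ k" for k
    unfolding chr_matrix_def matrix_vector_mult_def
    by (simp add: sum_distrib_right) (rule sum.swap)
  then show ?thesis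
    using assms by (simp add: cov_vf_def frechet_derivative_at[symmetric] vec_eq_iff)
qed

lemma chr_matrix_axis: "chr_matrix Gam x (axis i 1) $ k $ j = Gam x k i j"
  by (simp add: chr_matrix_def axis_def if_distrib[of "\<lambda>t. _ * t"] sum.delta' cong: if_cong)

lemma cov_vf_coordvf: "cov_vf Gam x X (coordvf j) = chr_matrix Gam x X *v axis j 1"
  using cov_vf_eq[OF has_derivative_const] by (simp add: coordvf_def)

lemma torsion_eq: "torsion Gam x k i j = Gam x k i j - Gam x k j i"
  by (simp add: torsion_def cov_vf_coordvf matrix_vector_mult_axis chr_matrix_axis)

lemma tilde_conn_sym: "tilde_conn Gam x k i j = tilde_conn Gam x k j i"
  by (simp add: tilde_conn_def torsion_eq algebra_simps)

lemma chr_matrix_sym: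
  assumes "\<And>k i j. Gam x k i j = Gam x k j i"
  shows "chr_matrix Gam x X *v Y = chr_matrix Gam x Y *v X"
proof -
  have "(chr_matrix Gam x Y *v X) $ k = (\<Sum>i\<in>UNIV. \<Sum>j\<in>UNIV. Gam x k j i * Y $ j * X $ i)" for k
    by (simp add: chr_matrix_def matrix_vector_mult_def sum_distrib_right)
  also have "\<dots> k = (\<Sum>i\<in>UNIV. \<Sum>j\<in>UNIV. Gam x k i j * X $ i * Y $ j)" for k
    by (simp add: assms mult_ac)
  also have "\<dots> k = (\<Sum>j\<in>UNIV. \<Sum>i\<in>UNIV. Gam x k i j * X $ i * Y $ j)" for k
    by (rule sum.swap)
  also have "\<dots> k = (chr_matrix Gam x X *v Y) $ k" for k
    by (simp add: chr_matrix_def matrix_vector_mult_def sum_distrib_right)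
  finally show ?thesis by (simp add: vec_eq_iff)
qed

lemma parallel_at_derivative:
  assumes "smooth_on U sg" "x \<in> U" "parallel_at Gam U x X sg"
  shows "frechet_derivative sg (at x) X = sg x v* chr_matrix Gam x X"
proof -
  let ?Dsg = "frechet_derivative sg (at x)"
  have "?Dsg X \<bullet> c = (sg x v* chr_matrix Gam x X) \<bullet> c" for c
  proof -
    have "((\<lambda>y. sg y \<bullet> c) has_derivative (\<lambda>v. ?Dsg v \<bullet> c)) (at x)"
      using smooth_on_has_derivative[OF assms(1,2)] by (auto intro!: derivative_eq_intros)
    then have "frechet_derivative (\<lambda>y. sg y \<bullet> c) (at x) X = ?Dsg X \<bullet> c"
      by (metis frechet_derivative_at)
    moreover have "cov_vf Gam x X (\<lambda>_. c) = chr_matrix Gam x X *v c"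
      using cov_vf_eq[OF has_derivative_const] by simp
    moreover have "cov_form Gam x X sg (\<lambda>_. c) = 0"
      using assms(3) smooth_on_const unfolding parallel_at_def by blast
    ultimately show ?thesis
      by (simp add: cov_form_def dot_lmul_matrix)
  qed
  then show ?thesis by (metis vector_eq_rdot)
qed

lemma parallel_at_affine_section:
  fixes Gam :: "real^'n \<Rightarrow> 'n \<Rightarrow> 'n \<Rightarrow> 'n \<Rightarrow> real"
  assumes "x \<in> U"
  shows "parallel_at Gam U x X (\<lambda>y. p + p v* chr_matrix Gam x (y - x))"
  unfolding parallel_at_def
proof (intro allI impI)
  fix Y :: "real^'n \<Rightarrow> real^'n"
  assume "smooth_on U Y"
  let ?DY = "frechet_derivative Y (at x)"
  let ?L = "\<lambda>v. p v* chr_matrix Gam x v"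
  have dY: "(Y has_derivative ?DY) (at x)"
    using smooth_on_has_derivative[OF \<open>smooth_on U Y\<close> assms] .
  have "((\<lambda>y. (p + ?L (y - x)) \<bullet> Y y) has_derivative
      (\<lambda>v. (p + ?L (x - x)) \<bullet> ?DY v + ?L v \<bullet> Y x)) (at x)"
    by (auto intro!: derivative_eq_intros dY
        bounded_linear.has_derivative[OF bounded_linear_covector_chr_matrix])
  then have "frechet_derivative (\<lambda>y. (p + ?L (y - x)) \<bullet> Y y) (at x) X
      = p \<bullet> ?DY X + ?L X \<bullet> Y x"
    by (metis (no_types, lifting) diff_self frechet_derivative_at chr_matrix_0
        add.right_neutral vector_matrix_mult_0_right)
  then show "cov_form Gam x X (\<lambda>y. p + ?L (y - x)) Y = 0"
    by (simp add: cov_form_def cov_vf_eq[OF dY] dot_lmul_matrix inner_add_right)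
qed

lemma horiz_eq:
  assumes "x \<in> U"
  shows "horiz Gam U x p = range (\<lambda>X. (X, p v* chr_matrix Gam x X))"
proof (intro set_eqI iffI)
  fix h assume "h \<in> horiz Gam U x p"
  then show "h \<in> range (\<lambda>X. (X, p v* chr_matrix Gam x X))"
    unfolding horiz_def using parallel_at_derivative[OF _ assms] by auto
next
  fix h assume "h \<in> range (\<lambda>X. (X, p v* chr_matrix Gam x X))"
  then obtain X where h: "h = (X, p v* chr_matrix Gam x X)" by blast
  define sg where "sg y = p + p v* chr_matrix Gam x (y - x)" for y
  have "(sg has_derivative (\<lambda>v. p v* chr_matrix Gam x v)) (at x)"
    unfolding sg_def
    by (auto intro!: derivative_eq_intros
        bounded_linear.has_derivative[OF bounded_linear_covector_chr_matrix])
  then have "frechet_derivative sg (at x) X = p v* chr_matrix Gam x X"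
    by (metis frechet_derivative_at)
  moreover have "sg x = p"
    by (simp add: sg_def)
  moreover have "smooth_on U sg"
    unfolding sg_def by (rule smooth_on_affine[OF bounded_linear_covector_chr_matrix])
  moreover have "parallel_at Gam U x X sg"
    unfolding sg_def by (rule parallel_at_affine_section[OF assms])
  ultimately show "h \<in> horiz Gam U x p"
    unfolding horiz_def h by (intro CollectI exI[of _ X] exI[of _ sg]) simp
qed

lemma vproj_eq:
  assumes "x \<in> U"
  shows "vproj Gam U x p (X, P) = P - p v* chr_matrix Gam x X"
  unfolding vproj_def horiz_eq[OF assms]
  by (rule the_equality) (auto simp: algebra_simps)

lemma hlift_eq:
  assumes "x \<in> U"
  shows "hlift Gam U x p X = (X, p v* chr_matrix Gam x X)"
  unfolding hlift_def horiz_eq[OF assms]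
  by (rule the_equality) auto

lemma JG_eq:
  assumes "x \<in> U"
  shows "JG Gam U J x p (X, P)
       = (J x *v X, p v* chr_matrix Gam x (J x *v X) + (P - p v* chr_matrix Gam x X) v* J x)"
  unfolding JG_def Let_def vproj_eq[OF assms] hlift_eq[OF assms] by simp

lemma omega_st_eq:
  fixes z :: "(real^'n) \<times> (real^'n)"
  shows "omega_st z V W = snd V \<bullet> fst W - snd W \<bullet> fst V"
proof -
  have l: "(liouville :: (real^'n) \<times> (real^'n) \<Rightarrow> _) = (\<lambda>z W. snd z \<bullet> fst W)"
    by (intro ext) (simp add: liouville_def inner_vec_def)
  have "frechet_derivative (\<lambda>z'. snd z' \<bullet> c) (at z) = (\<lambda>V. snd V \<bullet> c)" for c :: "real^'n"
    by (rule frechet_derivative_at[symmetric]) (auto intro!: derivative_eq_intros)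
  then show ?thesis unfolding omega_st_def ext_d_def l by simp
qed

lemma omega_st_nondegenerate:
  assumes "\<And>W. omega_st z Z W = omega_st z Z' W"
  shows "Z = Z'"
proof -
  have "omega_st z Z (snd Z - snd Z', fst Z' - fst Z) - omega_st z Z' (snd Z - snd Z', fst Z' - fst Z)
      = (snd Z - snd Z') \<bullet> (snd Z - snd Z') + (fst Z - fst Z') \<bullet> (fst Z - fst Z')"
    by (simp add: omega_st_eq algebra_simps inner_diff_left inner_diff_right inner_commute)
  then have "(snd Z - snd Z') \<bullet> (snd Z - snd Z') + (fst Z - fst Z') \<bullet> (fst Z - fst Z') = 0"
    using assms by simp
  then have "snd Z - snd Z' = 0 \<and> fst Z - fst Z' = 0"
    by (metis add_nonneg_eq_0_iff inner_ge_zero inner_eq_zero_iff)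
  then show ?thesis by (simp add: prod_eq_iff)
qed

definition skew_contract :: "(real^'n \<Rightarrow> real^'n^'n) \<Rightarrow> real^'n \<Rightarrow> real^'n
    \<Rightarrow> real^'n::finite" where
  "skew_contract N p X = p v* N X - (\<chi> l. p \<bullet> (N (axis l 1) *v X))"

lemma inner_skew_contract:
  assumes "linear N"
  shows "skew_contract N p X \<bullet> W = p \<bullet> (N X *v W) - p \<bullet> (N W *v X)"
proof -
  have "linear (\<lambda>W. p \<bullet> (N W *v X))"
    using linear_compose[OF linear_compose[OF assms
          bounded_linear.linear[OF bounded_linear_matrix_vector_mult_left]]
        bounded_linear.linear[OF bounded_linear_inner_right]]
    by (simp add: o_def)
  from linear_axis_expansion[OF this, of W]
  have "(\<chi> l. p \<bullet> (N (axis l 1) *v X)) \<bullet> W = p \<bullet> (N W *v X)"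
    by (simp add: inner_vec_def mult.commute)
  then show ?thesis by (simp add: skew_contract_def inner_diff_left dot_lmul_matrix)
qed

lemma Jc_eq:
  fixes J :: "real^'n \<Rightarrow> real^'n^'n"
  assumes dJ: "(J has_derivative DJ) (at x)"
  shows "Jc J (x, p) = (\<lambda>V. (J x *v fst V, snd V v* J x + skew_contract DJ p (fst V)))"
    (is "_ = ?A")
proof -
  have "liouvilleJ J = (\<lambda>z W. snd z \<bullet> (J (fst z) *v fst W))"
    by (intro ext)
      (simp add: liouvilleJ_def inner_vec_def matrix_vector_mult_def sum_distrib_left mult.assoc)
  moreover have "frechet_derivative (\<lambda>z. snd z \<bullet> (J (fst z) *v w)) (at (x, p))
      = (\<lambda>V. p \<bullet> (DJ (fst V) *v w) + snd V \<bullet> (J x *v w))" for w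
  proof (rule frechet_derivative_at[symmetric])
    have "((\<lambda>z. J (fst z)) has_derivative (\<lambda>V. DJ (fst V))) (at (x, p))"
      by (rule has_derivative_compose[OF has_derivative_fst[OF has_derivative_ident]]) (simp add: dJ)
    then have "((\<lambda>z. J (fst z) *v w) has_derivative (\<lambda>V. DJ (fst V) *v w)) (at (x, p))"
      by (rule bounded_linear.has_derivative[OF bounded_linear_matrix_vector_mult_left])
    then show "((\<lambda>z. snd z \<bullet> (J (fst z) *v w)) has_derivative
        (\<lambda>V. p \<bullet> (DJ (fst V) *v w) + snd V \<bullet> (J x *v w))) (at (x, p))"
      by (auto intro!: derivative_eq_intros)
  qed
  ultimately have key: "ext_d (liouvilleJ J) (x, p) V W = omega_st (x, p) (?A V) W" for V W
    using has_derivative_linear[OF dJ]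
    by (simp add: ext_d_def omega_st_eq inner_add_left inner_skew_contract dot_lmul_matrix)
  show ?thesis
    unfolding Jc_def
  proof (rule the_equality)
    fix B assume "\<forall>V W. ext_d (liouvilleJ J) (x, p) V W = omega_st (x, p) (B V) W"
    then show "B = ?A"
      using key by (intro ext omega_st_nondegenerate[where z = "(x, p)"]) metis
  qed (simp add: key)
qed

definition endo_cov_deriv :: "(real^'n \<Rightarrow> 'n \<Rightarrow> 'n \<Rightarrow> 'n \<Rightarrow> real) \<Rightarrow> real^'n \<Rightarrow> real^'n^'n
    \<Rightarrow> (real^'n \<Rightarrow> real^'n^'n) \<Rightarrow> real^'n \<Rightarrow> real^'n^'n::finite" where
  "endo_cov_deriv Gam x A DA X = DA X + chr_matrix Gam x X ** A - A ** chr_matrix Gam x X"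

lemma linear_endo_cov_deriv:
  assumes "linear DA"
  shows "linear (endo_cov_deriv Gam x A DA)"
  by (rule linearI)
    (simp_all add: endo_cov_deriv_def chr_matrix_def matrix_matrix_mult_def vec_eq_iff
      linear_add[OF assms] linear_scale[OF assms] algebra_simps sum.distrib sum_distrib_left)

lemma nablaJ_eq:
  assumes "(J has_derivative DJ) (at x)"
  shows "nablaJ Gam J x k i j = endo_cov_deriv Gam x (J x) DJ (axis i 1) $ k $ j"
proof -
  have "((\<lambda>y. J y *v coordvf j y) has_derivative (\<lambda>v. DJ v *v axis j 1)) (at x)"
    unfolding coordvf_def
    by (rule bounded_linear.has_derivative[OF bounded_linear_matrix_vector_mult_left assms])
  then have "nablaJ Gam J x k i j = (endo_cov_deriv Gam x (J x) DJ (axis i 1) *v axis j 1) $ k"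
    by (simp add: nablaJ_def endo_cov_deriv_def cov_vf_eq cov_vf_eq[OF has_derivative_const]
        coordvf_def matrix_vector_mult_add_rdistrib matrix_vector_mult_diff_rdistrib matrix_vector_mul_assoc)
  then show ?thesis by (simp add: matrix_vector_mult_axis)
qed

lemma gamma_op_skew:
  assumes "linear N"
  shows "gamma_op (\<lambda>k i j. - N (axis i 1) $ k $ j + N (axis j 1) $ k $ i) z V
       = (0, - skew_contract N (snd z) (fst V))"
proof -
  let ?p = "snd z" and ?X = "fst V"
  have vector_matrix_eq: "(\<Sum>i\<in>UNIV. \<Sum>k\<in>UNIV. ?p $ k * N (axis i 1) $ k $ l * ?X $ i) = (?p v* N ?X) $ l" for l
  proof -
    have "(?p v* N ?X) $ l = (\<Sum>k\<in>UNIV. \<Sum>i\<in>UNIV. ?p $ k * N (axis i 1) $ k $ l * ?X $ i)"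
      by (subst linear_axis_expansion[OF assms])
        (simp add: vector_matrix_mult_def sum_component sum_distrib_left mult_ac)
    also have "\<dots> = (\<Sum>i\<in>UNIV. \<Sum>k\<in>UNIV. ?p $ k * N (axis i 1) $ k $ l * ?X $ i)"
      by (rule sum.swap)
    finally show ?thesis ..
  qed
  have inner_eq: "(\<Sum>i\<in>UNIV. \<Sum>k\<in>UNIV. ?p $ k * N (axis l 1) $ k $ i * ?X $ i)
      = ?p \<bullet> (N (axis l 1) *v ?X)" for l
  proof -
    have "?p \<bullet> (N (axis l 1) *v ?X) = (\<Sum>k\<in>UNIV. \<Sum>i\<in>UNIV. ?p $ k * N (axis l 1) $ k $ i * ?X $ i)"
      by (simp add: inner_vec_def matrix_vector_mult_def sum_distrib_left mult_ac)
    also have "\<dots> = (\<Sum>i\<in>UNIV. \<Sum>k\<in>UNIV. ?p $ k * N (axis l 1) $ k $ i * ?X $ i)"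
      by (rule sum.swap)
    finally show ?thesis ..
  qed
  show ?thesis
    by (simp add: gamma_op_def skew_contract_def vec_eq_iff right_diff_distrib left_diff_distrib
        sum_subtractf vector_matrix_eq inner_eq)
qed

lemma skew_contract_endo_cov_deriv:
  assumes "linear DA" and "\<And>k i j. Gam x k i j = Gam x k j i"
  shows "skew_contract (endo_cov_deriv Gam x A DA) p X
       = skew_contract DA p X + (p v* chr_matrix Gam x X) v* A - p v* chr_matrix Gam x (A *v X)"
proof -
  have "skew_contract (endo_cov_deriv Gam x A DA) p X \<bullet> W
      = (skew_contract DA p X + (p v* chr_matrix Gam x X) v* A - p v* chr_matrix Gam x (A *v X)) \<bullet> W"
    for W
  proof -
    have "chr_matrix Gam x X *v W = chr_matrix Gam x W *v X"
      and "chr_matrix Gam x W *v (A *v X) = chr_matrix Gam x (A *v X) *v W"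
      by (rule chr_matrix_sym, rule assms(2))+
    then show ?thesis
      by (simp add: inner_skew_contract linear_endo_cov_deriv assms(1) endo_cov_deriv_def
          matrix_vector_mult_add_rdistrib matrix_vector_mult_diff_rdistrib
          matrix_vector_mul_assoc[symmetric] inner_add_left inner_diff_left
          inner_add_right inner_diff_right dot_lmul_matrix)
  qed
  then show ?thesis by (metis vector_eq_rdot)
qed

theorem corollary2p7:
  fixes U :: "(real^'n) set"
    and J :: "real^'n \<Rightarrow> real^'n^'n"
    and Gam :: "real^'n \<Rightarrow> 'n \<Rightarrow> 'n \<Rightarrow> 'n \<Rightarrow> real"
    and x p :: "real^'n"
    and V :: "(real^'n) \<times> (real^'n)"
  assumes "open U"
    and "smooth_on U J"
    and "\<forall>y\<in>U. J y ** J y = - mat 1"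
    and "\<forall>k i j. smooth_on U (\<lambda>y. Gam y k i j)"
    and "x \<in> U"
  shows "JH Gam J (x, p) V = JG (tilde_conn Gam) U J x p V"
proof -
  obtain X P where V: "V = (X, P)" by fastforce
  define DJ where "DJ = frechet_derivative J (at x)"
  have dJ: "(J has_derivative DJ) (at x)"
    unfolding DJ_def by (rule smooth_on_has_derivative[OF assms(2,5)])
  have "linear DJ" using dJ by (rule has_derivative_linear)
  define N where "N = endo_cov_deriv (tilde_conn Gam) x (J x) DJ"
  have "linear N" unfolding N_def by (rule linear_endo_cov_deriv[OF \<open>linear DJ\<close>])
  have "bracketJ (tilde_conn Gam) J x = (\<lambda>k i j. - N (axis i 1) $ k $ j + N (axis j 1) $ k $ i)"
    by (intro ext) (simp add: bracketJ_def nablaJ_eq[OF dJ] N_def)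
  then have "gamma_op (bracketJ (tilde_conn Gam) J x) (x, p) V = (0, - skew_contract N p X)"
    using gamma_op_skew[OF \<open>linear N\<close>, of "(x, p)" V] by (simp add: V)
  then have "JH Gam J (x, p) V = (J x *v X, P v* J x + skew_contract DJ p X - skew_contract N p X)"
    by (simp add: JH_def V Jc_eq[OF dJ])
  also have "\<dots> = (J x *v X, P v* J x - (p v* chr_matrix (tilde_conn Gam) x X) v* J x
      + p v* chr_matrix (tilde_conn Gam) x (J x *v X))"
    unfolding N_def skew_contract_endo_cov_deriv[OF \<open>linear DJ\<close> tilde_conn_sym] by simp
  also have "\<dots> = JG (tilde_conn Gam) U J x p V"
    by (simp add: V JG_eq[OF assms(5)] vector_matrix_mult_diff_distrib)
  finally show ?thesis .
qed

end
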